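(* Let $G$ be a bipartite graph with bipartition $A\cup B$ and minimum degree $\delta$, such that $|A|\ge |B|$. Then there are sequences of nonempty subsets $A=A_0\supseteq A_1\supseteq\dots\supseteq A_\delta$ and $B=B_0\supseteq B_1\supseteq\dots\supseteq B_\delta$, and pairwise edge-disjoint matchings $M_1,\dots,M_\delta$, such that $|A_i|=|B_i|$ for each $1\le i\le\delta$, and each $M_i$ is a perfect matching of $G[A_i\cup B_i]$. *)

theory Defs
  imports Main
begin

definition bipartite_graph :: "'v set \<Rightarrow> 'v set \<Rightarrow> ('v \<times> 'v) set \<Rightarrow> bool" where
  "bipartite_graph A B E \<longleftrightarrow> finite A \<and> finite B \<and> A \<inter> B = {} \<and> E \<subseteq> A \<times> B"

definition degree :: "('v \<times> 'v) set \<Rightarrow> 'v \<Rightarrow> nat" where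
  "degree E v = card {u. (v, u) \<in> E \<or> (u, v) \<in> E}"

definition min_degree :: "'v set \<Rightarrow> 'v set \<Rightarrow> ('v \<times> 'v) set \<Rightarrow> nat" where
  "min_degree A B E = Min (degree E ` (A \<union> B))"

definition perfect_matching_of :: "('v \<times> 'v) set \<Rightarrow> 'v set \<Rightarrow> 'v set \<Rightarrow> ('v \<times> 'v) set \<Rightarrow> bool" where
  "perfect_matching_of E X Y M \<longleftrightarrow>
     M \<subseteq> E \<inter> (X \<times> Y) \<and>
     (\<forall>x\<in>X. \<exists>!y. (x, y) \<in> M) \<and>
     (\<forall>y\<in>Y. \<exists>!x. (x, y) \<in> M)"

end

theory Submission
  imports Defs
begin

text \<open>Among the nonempty sets \<open>T \<subseteq> A\<close> with \<open>|N(T)| \<le> |T|\<close> (\<open>A\<close> is one, since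
  \<open>|B| \<le> |A|\<close>) take one of minimum size. Minimality gives Hall's condition on \<open>T\<close> and,
  as every vertex has a neighbour, \<open>|N(T)| = |T|\<close>; so Hall's theorem yields a perfect
  matching \<open>M\<^sub>1\<close> between \<open>A\<^sub>1 = T\<close> and \<open>B\<^sub>1 = N(T)\<close>. All neighbours of a vertex of \<open>T\<close>
  lie in \<open>N(T)\<close>, so after deleting the edges of \<open>M\<^sub>1\<close> the graph between \<open>T\<close> and \<open>N(T)\<close>
  has parts of equal size and every vertex of \<open>T\<close> has lost exactly one neighbour.
  Iterating \<open>\<delta>\<close> times gives the sequences; only the degrees of the vertices in \<open>A\<close> matter.\<close>

definition hall_condition :: "('a \<times> 'b) set \<Rightarrow> 'a set \<Rightarrow> bool" where
  "hall_condition R T \<longleftrightarrow> (\<forall>S\<subseteq>T. card S \<le> card (R``S))"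

lemma hall_condition_subset: "hall_condition R T \<Longrightarrow> S \<subseteq> T \<Longrightarrow> hall_condition R S"
  unfolding hall_condition_def by blast

lemma hall_condition_remove_tight_set:
  assumes hall: "hall_condition R T" and fin: "finite T" "finite (R``T)"
    and S: "S \<subseteq> T" "card (R``S) = card S"
  shows "hall_condition (R - UNIV \<times> R``S) (T - S)"
  unfolding hall_condition_def
proof (intro allI impI)
  fix U assume U: "U \<subseteq> T - S"
  have fin_U: "finite U" "finite S" using U S(1) fin(1) finite_subset by blast+
  have fin_R: "finite (R``U)" "finite (R``S)"
    using U S(1) fin(2) by (meson Diff_subset Image_mono finite_subset order_refl subset_trans)+
  have "card U + card S = card (U \<union> S)"
    using U fin_U by (subst card_Un_disjoint) auto
  also have "\<dots> \<le> card (R``(U \<union> S))"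
    using hall U S(1) unfolding hall_condition_def by (meson Diff_subset Un_least subset_trans)
  also have "R``(U \<union> S) = (R``U - R``S) \<union> R``S" by blast
  also have "card \<dots> = card (R``U - R``S) + card (R``S)"
    using fin_R by (intro card_Un_disjoint) auto
  also have "R``U - R``S = (R - UNIV \<times> R``S)``U" by blast
  finally show "card U \<le> card ((R - UNIV \<times> R``S)``U)"
    using S(2) by simp
qed

lemma hall_condition_remove_target:
  assumes surplus: "\<forall>S. S \<noteq> {} \<longrightarrow> S \<subset> T \<longrightarrow> card S < card (R``S)"
    and fin: "finite (R``T)" and "t \<in> T"
  shows "hall_condition (R - UNIV \<times> {b}) (T - {t})"
  unfolding hall_condition_def
proof (intro allI impI)
  fix U assume U: "U \<subseteq> T - {t}"
  show "card U \<le> card ((R - UNIV \<times> {b})``U)"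
  proof (cases "U = {}")
    case False
    then have "card U < card (R``U)" using surplus U \<open>t \<in> T\<close> by blast
    moreover have "finite (R``U)" using U fin by (meson Diff_subset Image_mono finite_subset order_refl)
    then have "card (R``U) \<le> Suc (card (R``U - {b}))"
      by (cases "b \<in> R``U") (simp_all add: card_Suc_Diff1)
    moreover have "R``U - {b} = (R - UNIV \<times> {b})``U" by blast
    ultimately show ?thesis by auto
  qed simp
qed

definition distinct_representatives :: "('a \<times> 'b) set \<Rightarrow> 'a set \<Rightarrow> ('a \<Rightarrow> 'b) \<Rightarrow> bool" where
  "distinct_representatives R T f \<longleftrightarrow> inj_on f T \<and> (\<forall>t\<in>T. (t, f t) \<in> R)"

lemma distinct_representatives_glue:
  assumes f: "distinct_representatives R S f"
    and g: "distinct_representatives (R - UNIV \<times> R``S) (T - S) g" and "S \<subseteq> T"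
  shows "distinct_representatives R T (\<lambda>t. if t \<in> S then f t else g t)"
proof -
  have "f ` S \<subseteq> R``S" using f unfolding distinct_representatives_def by blast
  moreover have "g ` (T - S) \<inter> R``S = {}" using g unfolding distinct_representatives_def by blast
  ultimately have "f ` S \<inter> g ` (T - S) = {}" by blast
  then have "inj_on (\<lambda>t. if t \<in> S then f t else g t) (S \<union> (T - S))"
    using f g unfolding distinct_representatives_def by (intro inj_on_disjoint_Un) auto
  moreover have "S \<union> (T - S) = T" using \<open>S \<subseteq> T\<close> by blast
  ultimately show ?thesis using f g unfolding distinct_representatives_def by auto
qed

lemma distinct_representatives_fun_upd:
  assumes g: "distinct_representatives (R - UNIV \<times> {b}) (T - {t}) g" and "(t, b) \<in> R" "t \<in> T"
  shows "distinct_representatives R T (g(t := b))"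
proof -
  have "inj_on (g(t := b)) (insert t (T - {t}))"
    using g unfolding distinct_representatives_def by (auto simp: inj_on_def)
  moreover have "insert t (T - {t}) = T" using \<open>t \<in> T\<close> by blast
  ultimately show ?thesis using assms unfolding distinct_representatives_def by auto
qed

text \<open>Halmos--Vaughan: either some nonempty proper \<open>S \<subset> T\<close> is tight, and \<open>S\<close> and \<open>T - S\<close>
  (with the neighbours of \<open>S\<close> removed) are matched separately, or every such \<open>S\<close> has a surplus
  and any edge \<open>(t, b)\<close> can be used, deleting \<open>t\<close> and \<open>b\<close>.\<close>

theorem hall_marriage:
  assumes "finite T" "finite (R``T)" "hall_condition R T"
  shows "\<exists>f. distinct_representatives R T f"
  using assms
proof (induction "card T" arbitrary: T R rule: less_induct)
  case less
  consider "T = {}"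
    | (tight) S where "S \<noteq> {}" "S \<subset> T" "card (R``S) = card S"
    | (surplus) "T \<noteq> {}" "\<forall>S. S \<noteq> {} \<longrightarrow> S \<subset> T \<longrightarrow> card S < card (R``S)"
    using less.prems(3) unfolding hall_condition_def by (metis le_neq_implies_less psubset_imp_subset)
  then show ?case
  proof cases
    case 1
    then show ?thesis unfolding distinct_representatives_def by simp
  next
    case tight
    have fin_S: "finite S" "finite (R``S)"
      using tight(2) less.prems(1,2) by (meson Image_mono finite_subset order_refl psubset_imp_subset)+
    obtain f where f: "distinct_representatives R S f"
      using less.hyps[OF psubset_card_mono[OF less.prems(1) tight(2)] fin_S]
        hall_condition_subset[OF less.prems(3)] tight(2) by blast
    have "T - S \<subset> T" using tight(1,2) by blast
    moreover have "finite ((R - UNIV \<times> R``S)``(T - S))"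
      using less.prems(2) by (rule finite_subset[rotated]) blast
    moreover have "hall_condition (R - UNIV \<times> R``S) (T - S)"
      using hall_condition_remove_tight_set[OF less.prems(3,1,2)] tight(2,3) by blast
    ultimately obtain g where "distinct_representatives (R - UNIV \<times> R``S) (T - S) g"
      using less.hyps[OF psubset_card_mono[OF less.prems(1)]] less.prems(1) by blast
    then have "distinct_representatives R T (\<lambda>t. if t \<in> S then f t else g t)"
      using tight(2) by (intro distinct_representatives_glue[OF f]) auto
    then show ?thesis by blast
  next
    case surplus
    obtain t where t: "t \<in> T" using surplus(1) by blast
    have "card {t} \<le> card (R``{t})" using less.prems(3) t unfolding hall_condition_def by blast
    then have "R``{t} \<noteq> {}" by auto
    then obtain b where b: "(t, b) \<in> R" by blast
    have "finite ((R - UNIV \<times> {b})``(T - {t}))"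
      using less.prems(2) by (rule finite_subset[rotated]) blast
    then obtain g where "distinct_representatives (R - UNIV \<times> {b}) (T - {t}) g"
      using less.hyps[OF card_Diff1_less[OF less.prems(1) t]] less.prems(1)
        hall_condition_remove_target[OF surplus(2) less.prems(2) t] by blast
    then have "distinct_representatives R T (g(t := b))"
      by (rule distinct_representatives_fun_upd[OF _ b t])
    then show ?thesis by blast
  qed
qed

lemma exists_tight_hall_set:
  assumes "finite X" "finite (E``X)" "X \<noteq> {}" "card (E``X) \<le> card X"
    and no_isolated: "\<forall>x\<in>X. E``{x} \<noteq> {}"
  shows "\<exists>T\<subseteq>X. T \<noteq> {} \<and> card (E``T) = card T \<and> hall_condition E T"
proof -
  define deficient where "deficient T \<longleftrightarrow> T \<subseteq> X \<and> T \<noteq> {} \<and> card (E``T) \<le> card T" for T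
  have "deficient X" unfolding deficient_def using assms(3,4) by blast
  then obtain T where T: "deficient T" and minimal: "\<And>T'. deficient T' \<Longrightarrow> card T \<le> card T'"
    using ex_has_least_nat[of deficient X card] by blast
  have "finite T" using T assms(1) finite_subset unfolding deficient_def by blast
  have fin_image: "finite (E``S)" if "S \<subseteq> T" for S
    using that T assms(2) unfolding deficient_def by (meson Image_mono finite_subset order_refl subset_trans)
  have surplus: "card S < card (E``S)" if "S \<noteq> {}" "S \<subset> T" for S
    using minimal[of S] psubset_card_mono[OF \<open>finite T\<close> that(2)] that T
    unfolding deficient_def by fastforce
  obtain t where t: "t \<in> T" using T unfolding deficient_def by blast
  have "card T \<le> card (E``T)"
  proof (cases "T = {t}")
    case True
    then show ?thesis using no_isolated t T \<open>finite T\<close> fin_image[of T]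
      unfolding deficient_def by (simp add: Suc_le_eq card_gt_0_iff)
  next
    case False
    have "card T = Suc (card (T - {t}))" by (rule card.remove[OF \<open>finite T\<close> t])
    also have "\<dots> \<le> card (E``(T - {t}))" using surplus[of "T - {t}"] t False by fastforce
    also have "\<dots> \<le> card (E``T)" using fin_image[of T] by (intro card_mono) auto
    finally show ?thesis .
  qed
  then have "hall_condition E T"
    unfolding hall_condition_def using surplus by (metis card.empty le_less psubsetI zero_le)
  then show ?thesis using T \<open>card T \<le> card (E``T)\<close> unfolding deficient_def by auto
qed

lemma perfect_matching_of_distinct_representatives:
  assumes f: "distinct_representatives E X f" and "f ` X = Y"
  shows "perfect_matching_of E X Y ((\<lambda>x. (x, f x)) ` X)"
  unfolding perfect_matching_of_def
proof (intro conjI ballI)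
  show "(\<lambda>x. (x, f x)) ` X \<subseteq> E \<inter> X \<times> Y"
    using f \<open>f ` X = Y\<close> unfolding distinct_representatives_def by blast
next
  fix x assume "x \<in> X"
  then show "\<exists>!y. (x, y) \<in> (\<lambda>x. (x, f x)) ` X" by blast
next
  fix y assume "y \<in> Y"
  then obtain x where "x \<in> X" "y = f x" using \<open>f ` X = Y\<close> by blast
  then show "\<exists>!x. (x, y) \<in> (\<lambda>x. (x, f x)) ` X"
    using f unfolding distinct_representatives_def by (auto simp: inj_on_def)
qed

lemma exists_tight_perfect_matching:
  assumes "finite X" "finite (E``X)" "X \<noteq> {}" "card (E``X) \<le> card X"
    and "\<forall>x\<in>X. E``{x} \<noteq> {}"
  shows "\<exists>T M. T \<subseteq> X \<and> T \<noteq> {} \<and> card (E``T) = card T \<and> perfect_matching_of E T (E``T) M"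
proof -
  obtain T where T: "T \<subseteq> X" "T \<noteq> {}" "card (E``T) = card T" "hall_condition E T"
    using exists_tight_hall_set[OF assms] by blast
  have fin: "finite T" "finite (E``T)"
    using T(1) assms(1,2) by (meson Image_mono finite_subset order_refl)+
  obtain f where f: "distinct_representatives E T f" using hall_marriage[OF fin T(4)] by blast
  then have "f ` T \<subseteq> E``T" "card (f ` T) = card (E``T)"
    using T(3) unfolding distinct_representatives_def by (auto simp: card_image)
  then have "f ` T = E``T" using card_subset_eq[OF fin(2)] by blast
  then have "perfect_matching_of E T (E``T) ((\<lambda>t. (t, f t)) ` T)"
    by (rule perfect_matching_of_distinct_representatives[OF f])
  then show ?thesis using T(1-3) by blast
qed

lemma card_Image_Diff_perfect_matching:
  assumes "perfect_matching_of E X Y M" "x \<in> X" "finite (E``{x})"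
  shows "card ((E - M)``{x}) = card (E``{x}) - 1"
proof -
  obtain y where y: "(x, y) \<in> M" "\<And>y'. (x, y') \<in> M \<Longrightarrow> y' = y"
    using assms(1,2) unfolding perfect_matching_of_def by blast
  then have "(E - M)``{x} = E``{x} - {y}" "y \<in> E``{x}"
    using assms(1) unfolding perfect_matching_of_def by blast+
  then show ?thesis using assms(3) by simp
qed

lemma perfect_matching_of_mono:
  "perfect_matching_of E' X Y M \<Longrightarrow> E' \<subseteq> E \<Longrightarrow> perfect_matching_of E X Y M"
  unfolding perfect_matching_of_def by blast

definition nested_matchings ::
    "('v \<times> 'v) set \<Rightarrow> nat \<Rightarrow> (nat \<Rightarrow> 'v set) \<Rightarrow> (nat \<Rightarrow> 'v set) \<Rightarrow> (nat \<Rightarrow> ('v \<times> 'v) set) \<Rightarrow> bool"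
  where
  "nested_matchings E k As Bs Ms \<longleftrightarrow>
     (\<forall>i\<le>k. As i \<noteq> {} \<and> Bs i \<noteq> {}) \<and>
     (\<forall>i<k. As (Suc i) \<subseteq> As i \<and> Bs (Suc i) \<subseteq> Bs i) \<and>
     (\<forall>i\<in>{1..k}. \<forall>j\<in>{1..k}. i \<noteq> j \<longrightarrow> Ms i \<inter> Ms j = {}) \<and>
     (\<forall>i\<in>{1..k}. card (As i) = card (Bs i) \<and> perfect_matching_of E (As i) (Bs i) (Ms i))"

text \<open>The matchings are indexed from \<open>1\<close>, so \<open>Ms 0\<close> is junk: overwriting it with \<open>M\<close> and
  shifting makes \<open>M\<close> the first matching of the longer chain.\<close>

lemma nested_matchings_Suc:
  assumes chain: "nested_matchings (E - M) k As Bs Ms"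
    and "As 0 \<subseteq> X" "Bs 0 \<subseteq> Y" "X \<noteq> {}" "Y \<noteq> {}"
    and "card (As 0) = card (Bs 0)" "perfect_matching_of E (As 0) (Bs 0) M"
  shows "nested_matchings E (Suc k) (case_nat X As) (case_nat Y Bs) (case_nat {} (Ms(0 := M)))"
proof -
  define Ms' where "Ms' = Ms(0 := M)"
  have pm: "perfect_matching_of (E - M) (As i) (Bs i) (Ms i)" if "i \<in> {1..k}" for i
    using chain that unfolding nested_matchings_def by blast
  have "card (As i) = card (Bs i) \<and> perfect_matching_of E (As i) (Bs i) (Ms' i)" if "i \<le> k" for i
    using chain that assms(6,7) perfect_matching_of_mono[OF pm Diff_subset]
    unfolding nested_matchings_def Ms'_def by (cases "i = 0") auto
  moreover have "Ms' i \<inter> Ms' j = {}" if "i \<le> k" "j \<le> k" "i \<noteq> j" for i j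
  proof -
    have Ms_M: "Ms i \<inter> M = {}" if "0 < i" "i \<le> k" for i
      using pm[of i] that unfolding perfect_matching_of_def by auto
    show ?thesis
      using chain that Ms_M[of i] Ms_M[of j] unfolding nested_matchings_def Ms'_def
      by (cases "i = 0"; cases "j = 0") auto
  qed
  ultimately show ?thesis
    using chain assms(2-5) unfolding nested_matchings_def Ms'_def[symmetric]
    by (auto simp: less_Suc_eq_0_disj split: nat.split)
qed

lemma nested_matchings_exist:
  assumes "finite X" "finite Y" "E``X \<subseteq> Y" "X \<noteq> {}" "Y \<noteq> {}" "card Y \<le> card X"
    and "\<forall>x\<in>X. k \<le> card (E``{x})"
  shows "\<exists>As Bs Ms. As 0 = X \<and> Bs 0 = Y \<and> nested_matchings E k As Bs Ms"
  using assms
proof (induction k arbitrary: X Y E)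
  case 0
  then show ?case unfolding nested_matchings_def by (intro exI[of _ "\<lambda>_. X"] exI[of _ "\<lambda>_. Y"]) auto
next
  case (Suc k)
  have fin_EX: "finite (E``X)" using Suc.prems(2,3) by (rule finite_subset[rotated])
  have card_EX: "card (E``X) \<le> card X"
    using card_mono[OF Suc.prems(2,3)] Suc.prems(6) by linarith
  have no_isolated: "\<forall>x\<in>X. E``{x} \<noteq> {}" using Suc.prems(7) by fastforce
  obtain T M where T: "T \<subseteq> X" "T \<noteq> {}" "card (E``T) = card T"
    and M: "perfect_matching_of E T (E``T) M"
    using exists_tight_perfect_matching[OF Suc.prems(1) fin_EX Suc.prems(4) card_EX no_isolated] by blast
  have ET_EX: "E``T \<subseteq> E``X" using T(1) by (rule Image_mono[OF order_refl])
  have fin: "finite T" "finite (E``T)"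
    using T(1) ET_EX Suc.prems(1) fin_EX by (auto intro: finite_subset)
  have "E``T \<noteq> {}" using T(2,3) fin(1) by auto
  have deg: "\<forall>x\<in>T. k \<le> card ((E - M)``{x})"
  proof
    fix x assume x: "x \<in> T"
    have "finite (E``{x})" using fin(2) by (rule finite_subset[rotated]) (use x in blast)
    moreover have "Suc k \<le> card (E``{x})" using Suc.prems(7) x T(1) by blast
    ultimately show "k \<le> card ((E - M)``{x})" using card_Image_Diff_perfect_matching[OF M x] by simp
  qed
  have "(E - M)``T \<subseteq> E``T" by blast
  moreover have "card (E``T) \<le> card T" using T(3) by simp
  ultimately obtain As Bs Ms where chain: "As 0 = T" "Bs 0 = E``T" "nested_matchings (E - M) k As Bs Ms"
    using Suc.IH[OF fin _ T(2) \<open>E``T \<noteq> {}\<close> _ deg] by blast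
  have "nested_matchings E (Suc k) (case_nat X As) (case_nat Y Bs) (case_nat {} (Ms(0 := M)))"
    using nested_matchings_Suc[OF chain(3)] chain(1,2) T(1,3) M ET_EX Suc.prems(3-5) by simp
  moreover have "case_nat X As 0 = X" "case_nat Y Bs 0 = Y" by simp_all
  ultimately show ?case by blast
qed

lemma bipartite_degree_eq_card_Image:
  assumes "bipartite_graph A B E" "x \<in> A"
  shows "degree E x = card (E``{x})"
proof -
  have "{u. (x, u) \<in> E \<or> (u, x) \<in> E} = E``{x}"
    using assms unfolding bipartite_graph_def by blast
  then show ?thesis unfolding degree_def by simp
qed

lemma min_degree_le_degree:
  assumes "bipartite_graph A B E" "x \<in> A \<union> B"
  shows "min_degree A B E \<le> degree E x"
  using assms unfolding min_degree_def bipartite_graph_def by (intro Min_le) auto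

theorem lemma2p2:
  fixes A B :: "'v set" and E :: "('v \<times> 'v) set" and \<delta> :: nat
  assumes "bipartite_graph A B E"
    and "A \<noteq> {}" and "B \<noteq> {}"
    and "\<delta> = min_degree A B E"
    and "card A \<ge> card B"
  shows "\<exists>As Bs :: nat \<Rightarrow> 'v set. \<exists>Ms :: nat \<Rightarrow> ('v \<times> 'v) set.
           As 0 = A \<and> Bs 0 = B \<and>
           (\<forall>i\<le>\<delta>. As i \<noteq> {} \<and> Bs i \<noteq> {}) \<and>
           (\<forall>i<\<delta>. As (Suc i) \<subseteq> As i \<and> Bs (Suc i) \<subseteq> Bs i) \<and>
           (\<forall>i\<in>{1..\<delta>}. \<forall>j\<in>{1..\<delta>}. i \<noteq> j \<longrightarrow> Ms i \<inter> Ms j = {}) \<and>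
           (\<forall>i\<in>{1..\<delta>}. card (As i) = card (Bs i) \<and> perfect_matching_of E (As i) (Bs i) (Ms i))"
proof -
  have G: "finite A" "finite B" "E``A \<subseteq> B"
    using assms(1) unfolding bipartite_graph_def by auto
  have "\<forall>x\<in>A. \<delta> \<le> card (E``{x})"
    using assms(1,4) bipartite_degree_eq_card_Image min_degree_le_degree by fastforce
  then obtain As Bs Ms where "As 0 = A" "Bs 0 = B" "nested_matchings E \<delta> As Bs Ms"
    using nested_matchings_exist[OF G assms(2,3,5)] by blast
  then show ?thesis unfolding nested_matchings_def by blast
qed

end
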